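(* The class of MPNNs can count $2$-paths at node level: for all node-graph pairs $(i_1,G_1),(i_2,G_2)$ with $C(2\text{-path},i_1,G_1)\ne C(2\text{-path},i_2,G_2)$, there exists an MPNN with $h^{(T)}_{i_1}(G_1)\ne h^{(T)}_{i_2}(G_2)$.
   Context: Graphs are finite, simple, undirected, $G=(V,E)$, possibly carrying node attributes $x_v$ and edge attributes $e_{u,v}$ (a fixed constant when absent). $N(v)$ is the neighbour set of $v$. A $2$-path is a sequence of edges $(v_1,v_2),(v_2,v_3)$ with $v_1,v_2,v_3$ pairwise distinct; two paths are identified when their edge sets coincide; $C(2\text{-path},i,G)$ is the number of inequivalent $2$-paths starting from $i$ (i.e. with $v_1=i$). A class $\mathcal F$ of functions on node-graph pairs can count $S$ at node level if for all $(i_1,G_1),(i_2,G_2)$ with $C(S,i_1,G_1)\ne C(S,i_2,G_2)$ there is $f\in\mathcal F$ with $f(i_1,G_1)\ne f(i_2,G_2)$. MPNNs. An MPNN is specified by $T$ and arbitrary functions $M_t$ (values in some $\mathbb R^{d_t}$), $U_t$, $t=0,\dots,T-1$: $h^{(0)}_i=x_i$ and $h^{(t+1)}_i=U_t\big(h^{(t)}_i,\sum_{j\in N(i)}M_t(h^{(t)}_i,h^{(t)}_j,e_{i,j})\big)$. The node-level function computed is $(i,G)\mapsto h^{(T)}_i$; the class of MPNNs consists of all such choices. *)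

theory Defs
  imports Complex_Main "HOL-Library.Function_Algebras"
begin

text \<open>Real vectors in R^d are represented as functions nat => real whose support
lies in {..<d}; addition is pointwise (plus_fun).\<close>

type_synonym vec = "nat \<Rightarrow> real"

definition in_dim :: "nat \<Rightarrow> vec \<Rightarrow> bool" where
  "in_dim d v \<longleftrightarrow> (\<forall>k\<ge>d. v k = 0)"

definition simple_graph :: "'v set \<Rightarrow> ('v \<Rightarrow> 'v \<Rightarrow> bool) \<Rightarrow> bool" where
  "simple_graph V E \<longleftrightarrow> finite V \<and> (\<forall>u w. E u w \<longrightarrow> u \<in> V \<and> w \<in> V)
     \<and> (\<forall>u w. E u w \<longrightarrow> E w u) \<and> (\<forall>u. \<not> E u u)"

definition nbrs :: "'v set \<Rightarrow> ('v \<Rightarrow> 'v \<Rightarrow> bool) \<Rightarrow> 'v \<Rightarrow> 'v set" where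
  "nbrs V E i = {j \<in> V. E i j}"

text \<open>2-paths starting at i, each identified with its edge set
  {{v1,v2},{v2,v3}}; C(2-path,i,G) is the number of distinct such edge sets.\<close>
definition two_paths_from :: "('v \<Rightarrow> 'v \<Rightarrow> bool) \<Rightarrow> 'v \<Rightarrow> 'v set set set" where
  "two_paths_from E i = {{{i, v2}, {v2, v3}} | v2 v3.
      E i v2 \<and> E v2 v3 \<and> i \<noteq> v2 \<and> v2 \<noteq> v3 \<and> i \<noteq> v3}"

definition count_2path :: "('v \<Rightarrow> 'v \<Rightarrow> bool) \<Rightarrow> 'v \<Rightarrow> nat" where
  "count_2path E i = card (two_paths_from E i)"

fun mpnn_h :: "(nat \<Rightarrow> vec \<Rightarrow> vec \<Rightarrow> vec \<Rightarrow> vec) \<Rightarrow> (nat \<Rightarrow> vec \<Rightarrow> vec \<Rightarrow> vec)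
    \<Rightarrow> 'v set \<Rightarrow> ('v \<Rightarrow> 'v \<Rightarrow> bool) \<Rightarrow> ('v \<Rightarrow> vec) \<Rightarrow> ('v \<Rightarrow> 'v \<Rightarrow> vec)
    \<Rightarrow> nat \<Rightarrow> 'v \<Rightarrow> vec" where
  "mpnn_h M U V E x e 0 i = x i"
| "mpnn_h M U V E x e (Suc t) i =
     U t (mpnn_h M U V E x e t i)
         (\<Sum>j\<in>nbrs V E i. M t (mpnn_h M U V E x e t i) (mpnn_h M U V E x e t j) (e i j))"

definition is_mpnn :: "nat \<Rightarrow> (nat \<Rightarrow> vec \<Rightarrow> vec \<Rightarrow> vec \<Rightarrow> vec) \<Rightarrow> (nat \<Rightarrow> vec \<Rightarrow> vec \<Rightarrow> vec) \<Rightarrow> bool" where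
  "is_mpnn T M U \<longleftrightarrow> (\<forall>t<T. (\<exists>d. \<forall>a b c. in_dim d (M t a b c))
                          \<and> (\<exists>d. \<forall>a b. in_dim d (U t a b)))"

end

theory Submission
  imports Defs
begin

text \<open>A 2-path from i is determined by its middle vertex j \<in> N(i) and its end vertex
  k \<in> N(j) - {i}, so C(2-path,i,G) = \<Sum>j\<in>N(i). (deg j - 1). A two-layer MPNN computes
  exactly this sum: the first layer sends the constant message 1, so that each node
  learns its degree; the second layer sends deg j - 1 from every neighbour j.\<close>

definition scalar_vec :: "real \<Rightarrow> vec" where
  "scalar_vec c = (\<lambda>k. if k = 0 then c else 0)"

lemma in_dim_scalar_vec: "in_dim 1 (scalar_vec c)"
  unfolding in_dim_def scalar_vec_def by auto

lemma sum_fun_apply: "(sum f S :: vec) k = (\<Sum>j\<in>S. f j k)"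
  by (induction S rule: infinite_finite_induct) (auto simp: plus_fun_def zero_fun_def)

lemma inj_on_two_path_edges:
  "inj_on (\<lambda>(b, c). {{a, b}, {b, c}}) {(b, c). a \<noteq> b \<and> b \<noteq> c \<and> c \<noteq> a}"
proof (rule inj_onI, clarsimp)
  fix b c b' c'
  assume distinct: "a \<noteq> b" "b \<noteq> c" "c \<noteq> a" "a \<noteq> b'" "b' \<noteq> c'" "c' \<noteq> a"
    and eq: "{{a, b}, {b, c}} = {{a, b'}, {b', c'}}"
  have "{a, b} = {a, b'}"
    using eq distinct by (metis doubleton_eq_iff insertCI insertE singletonD)
  then have "b = b'"
    using distinct by (simp add: doubleton_eq_iff)
  moreover have "{b, c} = {b', c'}"
    using eq distinct \<open>b = b'\<close> by (metis doubleton_eq_iff insertCI insertE singletonD)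
  ultimately show "b = b' \<and> c = c'"
    using distinct by (auto simp: doubleton_eq_iff)
qed

lemma two_paths_from_eq_image:
  assumes irrefl: "\<And>u. \<not> E u u"
  shows "two_paths_from E i =
    (\<lambda>(j, k). {{i, j}, {j, k}}) ` {(j, k). E i j \<and> E j k \<and> k \<noteq> i}"
  unfolding two_paths_from_def using irrefl by (auto simp: image_def) metis+

lemma count_2path_eq_card:
  assumes irrefl: "\<And>u. \<not> E u u"
  shows "count_2path E i = card {(j, k). E i j \<and> E j k \<and> k \<noteq> i}"
proof -
  have "inj_on (\<lambda>(j, k). {{i, j}, {j, k}}) {(j, k). E i j \<and> E j k \<and> k \<noteq> i}"
    by (rule inj_on_subset[OF inj_on_two_path_edges]) (use irrefl in auto)
  then show ?thesis
    unfolding count_2path_def two_paths_from_eq_image[OF irrefl] by (rule card_image)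
qed

lemma count_2path_eq_sum_degrees:
  assumes "simple_graph V E"
  shows "real (count_2path E i) = (\<Sum>j\<in>nbrs V E i. real (card (nbrs V E j)) - 1)"
proof -
  have fin: "\<And>u. finite (nbrs V E u)" and irrefl: "\<And>u. \<not> E u u"
    and sym: "\<And>u w. E u w \<Longrightarrow> E w u" and inV: "\<And>u w. E u w \<Longrightarrow> u \<in> V \<and> w \<in> V"
    using assms unfolding simple_graph_def nbrs_def by auto
  have "{(j, k). E i j \<and> E j k \<and> k \<noteq> i} = (SIGMA j:nbrs V E i. nbrs V E j - {i})"
    using inV unfolding nbrs_def by auto
  then have "real (count_2path E i) = (\<Sum>j\<in>nbrs V E i. real (card (nbrs V E j - {i})))"
    using fin by (simp add: count_2path_eq_card[OF irrefl])
  moreover have "real (card (nbrs V E j - {i})) = real (card (nbrs V E j)) - 1"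
    if "j \<in> nbrs V E i" for j
  proof -
    have "i \<in> nbrs V E j"
      using that sym inV by (auto simp: nbrs_def)
    then have "card (nbrs V E j) > 0"
      using fin card_gt_0_iff by blast
    with \<open>i \<in> nbrs V E j\<close> show ?thesis
      by (simp add: card_Diff_singleton of_nat_diff)
  qed
  ultimately show ?thesis
    by simp
qed

definition two_path_msg :: "nat \<Rightarrow> vec \<Rightarrow> vec \<Rightarrow> vec \<Rightarrow> vec" where
  "two_path_msg t h_i h_j e_ij = (if t = 0 then scalar_vec 1 else scalar_vec (h_j 0 - 1))"

definition two_path_upd :: "nat \<Rightarrow> vec \<Rightarrow> vec \<Rightarrow> vec" where
  "two_path_upd t h_i m = scalar_vec (m 0)"

lemma is_mpnn_two_path: "is_mpnn T two_path_msg two_path_upd"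
  unfolding is_mpnn_def two_path_msg_def two_path_upd_def using in_dim_scalar_vec by metis

lemma mpnn_h_two_path_layer1:
  "mpnn_h two_path_msg two_path_upd V E x e 1 i 0 = real (card (nbrs V E i))"
  by (simp add: two_path_msg_def two_path_upd_def scalar_vec_def sum_fun_apply)

lemma mpnn_h_two_path_layer2:
  "mpnn_h two_path_msg two_path_upd V E x e 2 i 0 = (\<Sum>j\<in>nbrs V E i. real (card (nbrs V E j)) - 1)"
  using mpnn_h_two_path_layer1[of V E x e]
  by (simp add: numeral_2_eq_2 two_path_msg_def two_path_upd_def scalar_vec_def sum_fun_apply)

theorem theorem6:
  fixes V1 V2 :: "'v set" and E1 E2 :: "'v \<Rightarrow> 'v \<Rightarrow> bool"
    and x1 x2 :: "'v \<Rightarrow> vec" and e1 e2 :: "'v \<Rightarrow> 'v \<Rightarrow> vec"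
    and i1 i2 :: 'v
  assumes "simple_graph V1 E1" and "simple_graph V2 E2"
    and "i1 \<in> V1" and "i2 \<in> V2"
    and "\<And>v. in_dim d1 (x1 v)" and "\<And>v. in_dim d1 (x2 v)"
    and "\<And>u v. in_dim d2 (e1 u v)" and "\<And>u v. in_dim d2 (e2 u v)"
    and "count_2path E1 i1 \<noteq> count_2path E2 i2"
  shows "\<exists>T M U. is_mpnn T M U \<and>
           mpnn_h M U V1 E1 x1 e1 T i1 \<noteq> mpnn_h M U V2 E2 x2 e2 T i2"
proof (intro exI conjI)
  show "is_mpnn 2 two_path_msg two_path_upd"
    by (rule is_mpnn_two_path)
  have "mpnn_h two_path_msg two_path_upd V1 E1 x1 e1 2 i1 0
      \<noteq> mpnn_h two_path_msg two_path_upd V2 E2 x2 e2 2 i2 0"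
    using assms(9)
    by (simp add: mpnn_h_two_path_layer2 flip: count_2path_eq_sum_degrees[OF assms(1)]
        count_2path_eq_sum_degrees[OF assms(2)])
  then show "mpnn_h two_path_msg two_path_upd V1 E1 x1 e1 2 i1
      \<noteq> mpnn_h two_path_msg two_path_upd V2 E2 x2 e2 2 i2"
    by metis
qed

end
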